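(* (Reliability of ensemble-based SpikeCP with p-variable merging.) Let $(\mathbf{x},c),(\mathbf{x}[1],c[1]),\dots,(\mathbf{x}[n],c[n])$ be i.i.d. pairs (input time series, label in $\{1,\dots,C\}$). Let $s^1,\dots,s^K$ be $K$ fixed loss functions (chosen independently of these data), $s^k_{c'}(\mathbf{x}^t)\in\mathbb{R}$. Fix a set of checkpoints $\mathcal{T}_s\subseteq\{1,\dots,T\}$ with $T\in\mathcal{T}_s$, a target accuracy $p_{\rm targ}\in(0,1)$, a set-size threshold $I_{\rm th}$, and set $\alpha=(1-p_{\rm targ})/|\mathcal{T}_s|$. For each $t\in\mathcal{T}_s$, $k$ and label $c'$ define $$p^k_{c'}(\mathbf{x}^t)=\frac{1+\sum_{i=1}^{n}\mathbb{1}\big(s^k_{c'}(\mathbf{x}^t)\le s^k_{c[i]}(\mathbf{x}^t[i])\big)}{n+1},\qquad p_{c'}(\mathbf{x}^t)=F\big(p^1_{c'}(\mathbf{x}^t),\dots,p^K_{c'}(\mathbf{x}^t)\big),$$ where $F$ is any p-merging function, and $\Gamma(\mathbf{x}^t)=\{c'\in\{1,\dots,C\}: p_{c'}(\mathbf{x}^t)>\alpha\}$. Let $T_s(\mathbf{x})=\min\{t\in\mathcal{T}_s: |\Gamma(\mathbf{x}^t)|\le I_{\rm th}\}$ if this set is nonempty and $T_s(\mathbf{x})=T$ otherwise, and output $\Gamma(\mathbf{x}):=\Gamma(\mathbf{x}^{T_s(\mathbf{x})})$. Then $\Pr\big(c\in\Gamma(\mathbf{x})\big)\ge p_{\rm targ}$,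 where the probability is over the test pair and the calibration data.
   Context: $\mathbf{x}^t=(\mathbf{x}_1,\dots,\mathbf{x}_t)$ denotes the prefix up to time $t$ of the time series $\mathbf{x}$. A function $F:[0,1]^K\to[0,\infty)$ is a p-merging function if for any random variables $P^1,\dots,P^K$ (with arbitrary dependence) each satisfying $\Pr(P^k\le\alpha')\le\alpha'$ for all $\alpha'\in(0,1)$, one has $\Pr(F(P^1,\dots,P^K)\le\alpha')\le\alpha'$ for all $\alpha'\in(0,1)$. Examples: $F(p^1,\dots,p^K)=K\min_k p^k$, $F=\max_k p^k$, and more generally $F(p^1,\dots,p^K)=a_r\big(\frac1K\sum_k (p^k)^r\big)^{1/r}$ with suitable constants $a_r$ (e.g. $a_r=K^{1/r}$ for $r\ge K-1$). In the paper the $s^k$ are log-losses of $K$ pre-trained spiking neural networks forming an ensemble (deep ensemble or samples from a variational posterior drawn independently of the data). *)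

theory Defs
  imports "HOL-Probability.Probability"
begin

text \<open>Validity is required for all random variables on probability spaces over the
  type 'w (instantiated with the sample space type in the main theorem).\<close>
definition p_merging :: "'w itself \<Rightarrow> nat \<Rightarrow> (real list \<Rightarrow> real) \<Rightarrow> bool" where
  "p_merging _ K F \<longleftrightarrow>
     (\<forall>ps. length ps = K \<and> set ps \<subseteq> {0..1} \<longrightarrow> F ps \<ge> 0) \<and>
     (\<forall>(M::'w measure) (P::nat \<Rightarrow> 'w \<Rightarrow> real).
        prob_space M \<and>
        (\<forall>k<K. P k \<in> borel_measurable M \<and> (\<forall>\<omega>\<in>space M. P k \<omega> \<in> {0..1}) \<and>
               (\<forall>a\<in>{0<..<1}. measure M {\<omega>\<in>space M. P k \<omega> \<le> a} \<le> a))
        \<longrightarrow> (\<forall>a\<in>{0<..<1}. measure M {\<omega>\<in>space M. F (map (\<lambda>k. P k \<omega>) [0..<K]) \<le> a} \<le> a))"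

text \<open>Conformal p-value of model k at checkpoint t for candidate label c'.
  s k t x c' stands for the loss s^k_{c'}(x^t); D i = (x[i], c[i]) for i = 1..n.\<close>
definition conf_pval ::
  "(nat \<Rightarrow> nat \<Rightarrow> 'a \<Rightarrow> nat \<Rightarrow> real) \<Rightarrow> nat \<Rightarrow> (nat \<Rightarrow> 'a \<times> nat) \<Rightarrow> nat \<Rightarrow> nat \<Rightarrow> 'a \<Rightarrow> nat \<Rightarrow> real" where
  "conf_pval s n D k t x c' =
     real (1 + card {i\<in>{1..n}. s k t x c' \<le> s k t (fst (D i)) (snd (D i))}) / real (n + 1)"

definition merged_pval ::
  "(real list \<Rightarrow> real) \<Rightarrow> nat \<Rightarrow> (nat \<Rightarrow> nat \<Rightarrow> 'a \<Rightarrow> nat \<Rightarrow> real) \<Rightarrow> nat \<Rightarrow> (nat \<Rightarrow> 'a \<times> nat)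
     \<Rightarrow> nat \<Rightarrow> 'a \<Rightarrow> nat \<Rightarrow> real" where
  "merged_pval F K s n D t x c' = F (map (\<lambda>k. conf_pval s n D k t x c') [0..<K])"

definition pred_set ::
  "(real list \<Rightarrow> real) \<Rightarrow> nat \<Rightarrow> (nat \<Rightarrow> nat \<Rightarrow> 'a \<Rightarrow> nat \<Rightarrow> real) \<Rightarrow> nat \<Rightarrow> (nat \<Rightarrow> 'a \<times> nat)
     \<Rightarrow> nat \<Rightarrow> real \<Rightarrow> nat \<Rightarrow> 'a \<Rightarrow> nat set" where
  "pred_set F K s n D C \<alpha> t x = {c'\<in>{1..C}. merged_pval F K s n D t x c' > \<alpha>}"

definition stop_time ::
  "(real list \<Rightarrow> real) \<Rightarrow> nat \<Rightarrow> (nat \<Rightarrow> nat \<Rightarrow> 'a \<Rightarrow> nat \<Rightarrow> real) \<Rightarrow> nat \<Rightarrow> (nat \<Rightarrow> 'a \<times> nat)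
     \<Rightarrow> nat \<Rightarrow> real \<Rightarrow> nat set \<Rightarrow> nat \<Rightarrow> nat \<Rightarrow> 'a \<Rightarrow> nat" where
  "stop_time F K s n D C \<alpha> Ts T Ith x =
     (let S = {t\<in>Ts. card (pred_set F K s n D C \<alpha> t x) \<le> Ith} in if S \<noteq> {} then Min S else T)"

definition spikecp_set ::
  "(real list \<Rightarrow> real) \<Rightarrow> nat \<Rightarrow> (nat \<Rightarrow> nat \<Rightarrow> 'a \<Rightarrow> nat \<Rightarrow> real) \<Rightarrow> nat \<Rightarrow> (nat \<Rightarrow> 'a \<times> nat)
     \<Rightarrow> nat \<Rightarrow> real \<Rightarrow> nat set \<Rightarrow> nat \<Rightarrow> nat \<Rightarrow> 'a \<Rightarrow> nat set" where
  "spikecp_set F K s n D C \<alpha> Ts T Ith x =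
     pred_set F K s n D C \<alpha> (stop_time F K s n D C \<alpha> Ts T Ith x) x"

end

theory Submission
  imports Defs
begin

(* A miss of the true label c means that c fails the test at the stopping checkpoint, so the miss
   event lies in the union over t in Ts of the events "merged p-value of c at t is at most alpha".
   For each model and checkpoint, the conformal p-value of the true label is valid, P(p <= a) <= a:
   the n + 1 scores are i.i.d., so the test score is equally likely to be each of them, and at most
   floor(a (n + 1)) of the n + 1 scores can have at most a (n + 1) scores weakly above them.
   A p-merging function preserves validity, and the union bound gives a miss probability of at most
   |Ts| alpha = 1 - p_targ. *)

(* All counted indices lie weakly above the counted index of least value, hence enter its rank. *)
lemma card_low_rank_le:
  fixes w :: "'i \<Rightarrow> real"
  assumes "finite I"
  shows "card {j\<in>I. card {i\<in>I. w j \<le> w i} \<le> m} \<le> m"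
proof (cases "{j\<in>I. card {i\<in>I. w j \<le> w i} \<le> m} = {}")
  case True
  then show ?thesis by (metis card.empty le0)
next
  case False
  define J where "J = {j\<in>I. card {i\<in>I. w j \<le> w i} \<le> m}"
  have fin: "finite J" using assms J_def by simp
  then have "Min (w ` J) \<in> w ` J" using False J_def by (intro Min_in) auto
  then obtain j0 where j0: "j0 \<in> J" "w j0 = Min (w ` J)" by auto
  have "J \<subseteq> {i\<in>I. w j0 \<le> w i}" using j0 fin J_def by auto
  then have "card J \<le> card {i\<in>I. w j0 \<le> w i}" using assms by (intro card_mono) auto
  also have "\<dots> \<le> m" using j0 J_def by auto
  finally show ?thesis using J_def by simp
qed

definition low_rank_set :: "'i set \<Rightarrow> 'i \<Rightarrow> real \<Rightarrow> ('i \<Rightarrow> real) set" where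
  "low_rank_set I j c =
     {w \<in> space (\<Pi>\<^sub>M i\<in>I. borel). real (card {i\<in>I. w j \<le> w i}) \<le> c}"

lemma low_rank_set_sets:
  fixes I :: "'i set"
  assumes "finite I" "j \<in> I"
  shows "low_rank_set I j c \<in> sets (\<Pi>\<^sub>M i\<in>I. borel)"
proof -
  have "real (card {i\<in>I. w j \<le> w i}) = (\<Sum>i\<in>I. if w j \<le> w i then 1 else 0)" for w :: "'i \<Rightarrow> real"
    using assms(1) by (simp add: sum.inter_filter[symmetric])
  moreover have "{w \<in> space (\<Pi>\<^sub>M i\<in>I. borel). (\<Sum>i\<in>I. if (w::'i \<Rightarrow> real) j \<le> w i then 1 else 0::real) \<le> c}
      \<in> sets (\<Pi>\<^sub>M i\<in>I. borel)"
    using assms by measurable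
  ultimately show ?thesis unfolding low_rank_set_def by simp
qed

lemma measure_PiM_low_rank_set_swap:
  fixes I :: "'i set" and N :: "real measure"
  assumes N: "prob_space N" "sets N = sets borel" and "finite I" "i \<in> I" "j \<in> I"
  shows "measure (\<Pi>\<^sub>M k\<in>I. N) (low_rank_set I i c) = measure (\<Pi>\<^sub>M k\<in>I. N) (low_rank_set I j c)"
proof -
  define P where "P = (\<Pi>\<^sub>M k\<in>I. N)"
  have sets_P: "sets P = sets (\<Pi>\<^sub>M k\<in>I. borel)"
    unfolding P_def using N(2) by (intro sets_PiM_cong) auto
  define \<tau> where "\<tau> = Transposition.transpose i j"
  define \<rho> where "\<rho> = (\<lambda>w::'i \<Rightarrow> real. \<lambda>k\<in>I. w (\<tau> k))"
  have \<tau>: "\<tau> \<in> I \<rightarrow> I" "inj_on \<tau> I"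
    unfolding \<tau>_def using assms by (auto simp: Transposition.transpose_def inj_on_def intro: transpose_eq_imp_eq)
  have \<rho>_P: "distr P P \<rho> = P"
    using distr_PiM_reindex[of I "\<lambda>_. N" \<tau> I] N(1) \<tau> unfolding P_def \<rho>_def by simp
  have \<rho>_meas: "\<rho> \<in> measurable P P"
    unfolding \<rho>_def P_def using \<tau>(1)
    by (intro measurable_restrict) (auto intro!: measurable_component_singleton)
  have rank_\<rho>: "card {k\<in>I. \<rho> w i \<le> \<rho> w k} = card {k\<in>I. w j \<le> w k}" for w
  proof -
    have "\<tau> (\<tau> k) = k" "\<tau> i = j" for k unfolding \<tau>_def by simp_all
    then have "{k\<in>I. \<rho> w i \<le> \<rho> w k} = \<tau> ` {k\<in>I. w j \<le> w k}"
      using \<tau>(1) assms(4) unfolding \<rho>_def by (auto simp: image_iff Pi_iff) metis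
    then show ?thesis using \<tau>(2) by (simp add: card_image inj_on_subset)
  qed
  have "measure P (low_rank_set I i c) = measure (distr P P \<rho>) (low_rank_set I i c)"
    by (simp add: \<rho>_P)
  also have "\<dots> = measure P (\<rho> -` low_rank_set I i c \<inter> space P)"
    using assms(3,4) by (intro measure_distr[OF \<rho>_meas]) (simp add: sets_P low_rank_set_sets)
  also have "\<rho> -` low_rank_set I i c \<inter> space P = low_rank_set I j c"
    using measurable_space[OF \<rho>_meas] sets_eq_imp_space_eq[OF sets_P]
    unfolding low_rank_set_def by (auto simp: rank_\<rho>)
  finally show ?thesis unfolding P_def .
qed

lemma sum_indicator_low_rank_set_le:
  fixes I :: "'i set"
  assumes "finite I" "0 \<le> c"
  shows "(\<Sum>k\<in>I. indicator (low_rank_set I k c) w) \<le> c"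
proof -
  have "(\<Sum>k\<in>I. indicator (low_rank_set I k c) w) = real (card {k\<in>I. w \<in> low_rank_set I k c})"
    using assms(1) by (simp add: indicator_def sum.If_cases Int_def)
  also have "card {k\<in>I. w \<in> low_rank_set I k c} \<le> card {k\<in>I. card {i\<in>I. w k \<le> w i} \<le> nat \<lfloor>c\<rfloor>}"
    using assms(1) by (intro card_mono) (auto simp: low_rank_set_def le_nat_floor)
  also have "\<dots> \<le> nat \<lfloor>c\<rfloor>"
    using assms(1) by (rule card_low_rank_le)
  finally show ?thesis using assms(2) by linarith
qed

lemma measure_PiM_low_rank_set_le:
  fixes I :: "'i set" and N :: "real measure"
  assumes N: "prob_space N" "sets N = sets borel" and I: "finite I" "j \<in> I" and c: "0 \<le> c"
  shows "measure (\<Pi>\<^sub>M k\<in>I. N) (low_rank_set I j c) \<le> c / card I"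
proof -
  define P where "P = (\<Pi>\<^sub>M k\<in>I. N)"
  interpret P: prob_space P unfolding P_def using N(1) by (intro prob_space_PiM) auto
  have sets_P: "sets P = sets (\<Pi>\<^sub>M k\<in>I. borel)"
    unfolding P_def using N(2) by (intro sets_PiM_cong) auto
  have ev: "low_rank_set I k c \<in> sets P" if "k \<in> I" for k
    unfolding sets_P using I(1) that by (rule low_rank_set_sets)
  have "real (card I) * measure P (low_rank_set I j c) = (\<Sum>k\<in>I. measure P (low_rank_set I k c))"
    using measure_PiM_low_rank_set_swap[OF N I(1) _ I(2)] by (simp add: P_def)
  also have "\<dots> = (\<integral>w. (\<Sum>k\<in>I. indicator (low_rank_set I k c) w) \<partial>P)"
    using ev by (simp add: Bochner_Integration.integral_sum P.emeasure_eq_measure)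
  also have "\<dots> \<le> (\<integral>w. c \<partial>P)"
    using ev sum_indicator_low_rank_set_le[OF I(1) c]
    by (intro integral_mono) (auto simp: P.emeasure_eq_measure)
  also have "\<dots> = c" by (simp add: P.prob_space)
  moreover have "0 < real (card I)" using I card_gt_0_iff by auto
  ultimately show ?thesis
    unfolding P_def by (metis pos_le_divide_eq mult.commute)
qed

lemma (in prob_space) measure_low_rank_le_iid:
  fixes W :: "'i \<Rightarrow> 'a \<Rightarrow> real"
  assumes I: "finite I" "j \<in> I" and indep: "indep_vars (\<lambda>_. borel) W I"
    and ident: "\<And>i. i \<in> I \<Longrightarrow> distr M borel (W i) = distr M borel (W j)" and c: "0 \<le> c"
  shows "measure M {\<omega>\<in>space M. real (card {i\<in>I. W j \<omega> \<le> W i \<omega>}) \<le> c} \<le> c / card I"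
proof -
  have W_meas: "W i \<in> borel_measurable M" if "i \<in> I" for i
    using indep that by (auto simp: indep_vars_def2)
  define X where "X = (\<lambda>\<omega>. \<lambda>i\<in>I. W i \<omega>)"
  have X_meas: "X \<in> measurable M (\<Pi>\<^sub>M i\<in>I. borel)"
    unfolding X_def using W_meas by measurable
  have "distr M (\<Pi>\<^sub>M i\<in>I. borel) X = (\<Pi>\<^sub>M i\<in>I. distr M borel (W i))"
    unfolding X_def using I(2) indep W_meas by (subst indep_vars_iff_distr_eq_PiM'[symmetric]) auto
  also have "\<dots> = (\<Pi>\<^sub>M i\<in>I. distr M borel (W j))"
    using ident by (intro PiM_cong) auto
  finally have X_distr: "distr M (\<Pi>\<^sub>M i\<in>I. borel) X = (\<Pi>\<^sub>M i\<in>I. distr M borel (W j))" .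
  have rank_X: "{i\<in>I. X \<omega> j \<le> X \<omega> i} = {i\<in>I. W j \<omega> \<le> W i \<omega>}" for \<omega>
    using I(2) unfolding X_def by auto
  have "{\<omega>\<in>space M. real (card {i\<in>I. W j \<omega> \<le> W i \<omega>}) \<le> c} = X -` low_rank_set I j c \<inter> space M"
    using measurable_space[OF X_meas] unfolding low_rank_set_def by (auto simp: rank_X)
  also have "measure M \<dots> = measure (\<Pi>\<^sub>M i\<in>I. distr M borel (W j)) (low_rank_set I j c)"
    using I by (simp add: measure_distr[OF X_meas, symmetric] X_distr low_rank_set_sets)
  also have "\<dots> \<le> c / card I"
    using W_meas I c by (intro measure_PiM_low_rank_set_le prob_space_distr) auto
  finally show ?thesis .
qed

lemma conf_pval_mem_grid:
  "conf_pval s n D k t x c' \<in> (\<lambda>j. real j / real (n + 1)) ` {..n + 1}"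
proof -
  have "card {i\<in>{1..n}. s k t x c' \<le> s k t (fst (D i)) (snd (D i))} \<le> card {1..n}"
    by (rule card_mono) auto
  then show ?thesis unfolding conf_pval_def by (intro imageI) simp
qed

lemma conf_pval_bounds: "conf_pval s n D k t x c' \<in> {0..1}"
  using conf_pval_mem_grid[of s n D k t x c'] by (auto simp: divide_le_eq)

lemma stop_time_mem:
  assumes "finite Ts"
  shows "stop_time F K s n D C \<alpha> Ts T Ith x \<in> insert T Ts"
  using assms Min_in[of "{t\<in>Ts. card (pred_set F K s n D C \<alpha> t x) \<le> Ith}"]
  unfolding stop_time_def by (auto simp: Let_def)

lemma spikecp_set_cong:
  assumes Ts: "Ts \<subseteq> {1..T}"
    and same: "\<And>t c' k. t \<le> T \<Longrightarrow> c' \<in> {1..C} \<Longrightarrow> k < K \<Longrightarrow>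
      conf_pval s n D k t x c' = conf_pval s n D' k t x' c'"
  shows "spikecp_set F K s n D C \<alpha> Ts T Ith x = spikecp_set F K s n D' C \<alpha> Ts T Ith x'"
proof -
  have "merged_pval F K s n D t x c' = merged_pval F K s n D' t x' c'"
    if "t \<le> T" "c' \<in> {1..C}" for t c'
    unfolding merged_pval_def using same[OF that] by (intro arg_cong[where f=F] map_cong) auto
  then have pred: "pred_set F K s n D C \<alpha> t x = pred_set F K s n D' C \<alpha> t x'" if "t \<le> T" for t
    using that unfolding pred_set_def by auto
  then have "{t\<in>Ts. card (pred_set F K s n D C \<alpha> t x) \<le> Ith} =
      {t\<in>Ts. card (pred_set F K s n D' C \<alpha> t x') \<le> Ith}"
    using Ts by auto
  then have stop: "stop_time F K s n D' C \<alpha> Ts T Ith x' = stop_time F K s n D C \<alpha> Ts T Ith x"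
    unfolding stop_time_def by simp
  have "stop_time F K s n D C \<alpha> Ts T Ith x \<le> T"
    using stop_time_mem[OF finite_subset[OF Ts], of F K s n D C \<alpha> T Ith x] Ts by auto
  then show ?thesis unfolding spikecp_set_def stop by (rule pred)
qed

lemma notin_spikecp_set:
  assumes "finite Ts" "c \<in> {1..C}" "c \<notin> spikecp_set F K s n D C \<alpha> Ts T Ith x"
  shows "\<exists>t\<in>insert T Ts. merged_pval F K s n D t x c \<le> \<alpha>"
proof
  show "stop_time F K s n D C \<alpha> Ts T Ith x \<in> insert T Ts"
    using assms(1) by (rule stop_time_mem)
  show "merged_pval F K s n D (stop_time F K s n D C \<alpha> Ts T Ith x) x c \<le> \<alpha>"
    using assms(2,3) unfolding spikecp_set_def pred_set_def by simp
qed

lemma p_mergingD: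
  fixes M :: "'w measure" and P :: "nat \<Rightarrow> 'w \<Rightarrow> real"
  assumes "p_merging TYPE('w) K F" "prob_space M"
    and "\<And>k. k < K \<Longrightarrow> P k \<in> borel_measurable M"
    and "\<And>k \<omega>. k < K \<Longrightarrow> \<omega> \<in> space M \<Longrightarrow> P k \<omega> \<in> {0..1}"
    and "\<And>k a. k < K \<Longrightarrow> a \<in> {0<..<1} \<Longrightarrow> measure M {\<omega>\<in>space M. P k \<omega> \<le> a} \<le> a"
    and "a \<in> {0<..<1}"
  shows "measure M {\<omega>\<in>space M. F (map (\<lambda>k. P k \<omega>) [0..<K]) \<le> a} \<le> a"
  using conjunct2[OF assms(1)[unfolded p_merging_def], rule_format, of M P a] assms(2-6) by auto

lemma sets_Collect_determined_by_finite:
  assumes "finite A" "\<And>\<omega>. \<omega> \<in> space M \<Longrightarrow> f \<omega> \<in> A"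
    and "\<And>a. a \<in> A \<Longrightarrow> {\<omega>\<in>space M. f \<omega> = a} \<in> sets M"
    and "\<And>\<omega> \<omega>'. \<omega> \<in> space M \<Longrightarrow> \<omega>' \<in> space M \<Longrightarrow> f \<omega> = f \<omega>' \<Longrightarrow> P \<omega> \<Longrightarrow> P \<omega>'"
  shows "{\<omega>\<in>space M. P \<omega>} \<in> sets M"
proof -
  define B where "B = f ` {\<omega>\<in>space M. P \<omega>}"
  have "{\<omega>\<in>space M. P \<omega>} = (\<Union>a\<in>B. {\<omega>\<in>space M. f \<omega> = a})"
  proof (intro equalityI subsetI)
    fix \<omega> assume "\<omega> \<in> (\<Union>a\<in>B. {\<omega>\<in>space M. f \<omega> = a})"
    then obtain \<omega>' where "\<omega>' \<in> space M" "P \<omega>'" "\<omega> \<in> space M" "f \<omega>' = f \<omega>"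
      unfolding B_def by auto
    then show "\<omega> \<in> {\<omega>\<in>space M. P \<omega>}" using assms(4)[of \<omega>' \<omega>] by simp
  qed (auto simp: B_def)
  moreover have "B \<subseteq> A" unfolding B_def using assms(2) by auto
  ultimately show ?thesis
    using assms(1,3) finite_subset by (metis (no_types, lifting) sets.finite_UN subsetD)
qed

(* Z 0 is the test pair and Z 1, ..., Z n are the calibration pairs. *)
locale iid_calibration = prob_space M
  for M :: "'w measure" and S :: "'a measure" and Z :: "nat \<Rightarrow> 'w \<Rightarrow> 'a \<times> nat" and n :: nat
    and s :: "nat \<Rightarrow> nat \<Rightarrow> 'a \<Rightarrow> nat \<Rightarrow> real" +
  assumes indep: "indep_vars (\<lambda>_. S \<Otimes>\<^sub>M count_space UNIV) Z {0..n}"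
    and ident: "\<And>i. i \<in> {0..n} \<Longrightarrow>
      distr M (S \<Otimes>\<^sub>M count_space UNIV) (Z i) = distr M (S \<Otimes>\<^sub>M count_space UNIV) (Z 0)"
    and loss_measurable: "\<And>k t c'. (\<lambda>x. s k t x c') \<in> borel_measurable S"
begin

abbreviation pval :: "nat \<Rightarrow> nat \<Rightarrow> nat \<Rightarrow> 'w \<Rightarrow> real" where
  "pval k t c' \<omega> \<equiv> conf_pval s n (\<lambda>i. Z i \<omega>) k t (fst (Z 0 \<omega>)) c'"

lemma Z_measurable: "i \<le> n \<Longrightarrow> Z i \<in> M \<rightarrow>\<^sub>M S \<Otimes>\<^sub>M count_space UNIV"
  using indep by (auto simp: indep_vars_def2)

lemma label_measurable: "(\<lambda>\<omega>. snd (Z 0 \<omega>)) \<in> M \<rightarrow>\<^sub>M count_space UNIV"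
  using measurable_compose[OF Z_measurable measurable_snd] by simp

lemma loss_pair_measurable:
  "(\<lambda>z. s k t (fst z) (snd z)) \<in> borel_measurable (S \<Otimes>\<^sub>M count_space UNIV)"
proof -
  have "(\<lambda>z. s k t (fst z) c) \<in> borel_measurable (S \<Otimes>\<^sub>M count_space UNIV)" for c
    by (rule measurable_compose[OF measurable_fst]) (use loss_measurable in simp)
  then have "(\<lambda>z. (\<lambda>c z. s k t (fst z) c) (snd z) z) \<in> borel_measurable (S \<Otimes>\<^sub>M count_space UNIV)"
    by (rule measurable_compose_countable[OF _ measurable_snd])
  then show ?thesis by simp
qed

lemma score_measurable: "i \<le> n \<Longrightarrow> (\<lambda>\<omega>. s k t (fst (Z i \<omega>)) (snd (Z i \<omega>))) \<in> borel_measurable M"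
  using measurable_compose[OF Z_measurable loss_pair_measurable] by simp

lemma pval_measurable: "pval k t c' \<in> borel_measurable M"
proof -
  have [measurable]: "(\<lambda>\<omega>. s k t (fst (Z 0 \<omega>)) c') \<in> borel_measurable M"
    using measurable_compose[OF measurable_compose[OF Z_measurable measurable_fst] loss_measurable] by simp
  have [measurable]: "i \<in> {1..n} \<Longrightarrow> (\<lambda>\<omega>. s k t (fst (Z i \<omega>)) (snd (Z i \<omega>))) \<in> borel_measurable M" for i
    by (intro score_measurable) simp
  have card_sum: "real (card {i\<in>{1..n}. Q i}) = (\<Sum>i\<in>{1..n}. if Q i then 1 else 0)" for Q
    by (simp add: sum.inter_filter[symmetric])
  show ?thesis
    unfolding conf_pval_def of_nat_add card_sum by measurable
qed

lemma pval_true_label_le: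
  assumes "0 \<le> a"
  shows "measure M {\<omega>\<in>space M. pval k t (snd (Z 0 \<omega>)) \<omega> \<le> a} \<le> a"
proof -
  define W where "W = (\<lambda>i \<omega>. s k t (fst (Z i \<omega>)) (snd (Z i \<omega>)))"
  have W_indep: "indep_vars (\<lambda>_. borel) W {0..n}"
    unfolding W_def
    using indep_vars_compose2[OF indep, of "\<lambda>_ z. s k t (fst z) (snd z)"] loss_pair_measurable
    by simp
  have W_distr: "distr M borel (W i) =
      distr (distr M (S \<Otimes>\<^sub>M count_space UNIV) (Z i)) borel (\<lambda>z. s k t (fst z) (snd z))" if "i \<le> n" for i
    using distr_distr[OF loss_pair_measurable Z_measurable[OF that]] by (simp add: W_def comp_def)
  have W_ident: "distr M borel (W i) = distr M borel (W 0)" if "i \<in> {0..n}" for i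
    using W_distr ident[OF that] that by simp
  have "card {i\<in>{0..n}. W 0 \<omega> \<le> W i \<omega>} = Suc (card {i\<in>{1..n}. W 0 \<omega> \<le> W i \<omega>})" for \<omega>
  proof -
    have "{i\<in>{0..n}. W 0 \<omega> \<le> W i \<omega>} = insert 0 {i\<in>{1..n}. W 0 \<omega> \<le> W i \<omega>}"
      by auto
    then show ?thesis by (simp only: card_insert_disjoint finite_Collect_conjI finite_atLeastAtMost) auto
  qed
  then have pval_eq: "pval k t (snd (Z 0 \<omega>)) \<omega> = real (card {i\<in>{0..n}. W 0 \<omega> \<le> W i \<omega>}) / real (n + 1)"
    for \<omega>
    unfolding conf_pval_def W_def by simp
  have "{\<omega>\<in>space M. pval k t (snd (Z 0 \<omega>)) \<omega> \<le> a} =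
      {\<omega>\<in>space M. real (card {i\<in>{0..n}. W 0 \<omega> \<le> W i \<omega>}) \<le> a * real (n + 1)}"
    unfolding pval_eq by (simp only: pos_divide_le_eq of_nat_0_less_iff zero_less_Suc add_Suc_right add_0_right)
  also have "measure M \<dots> \<le> a * real (n + 1) / card {0..n}"
    by (rule measure_low_rank_le_iid[OF _ _ W_indep W_ident]) (use assms in simp_all)
  also have "\<dots> = a" by simp
  finally show ?thesis .
qed

lemma merged_pval_true_label_le:
  assumes "p_merging TYPE('w) K F" "a \<in> {0<..<1}"
  shows "measure M {\<omega>\<in>space M. merged_pval F K s n (\<lambda>i. Z i \<omega>) t (fst (Z 0 \<omega>)) (snd (Z 0 \<omega>)) \<le> a} \<le> a"
  unfolding merged_pval_def
proof (rule p_mergingD[where P = "\<lambda>k \<omega>. pval k t (snd (Z 0 \<omega>)) \<omega>", OF assms(1) prob_space_axioms _ _ _ assms(2)])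
  show "(\<lambda>\<omega>. pval k t (snd (Z 0 \<omega>)) \<omega>) \<in> borel_measurable M" for k
    using measurable_compose_countable[where f = "\<lambda>c. pval k t c", OF pval_measurable label_measurable] .
  show "pval k t (snd (Z 0 \<omega>)) \<omega> \<in> {0..1}" for k \<omega>
    by (rule conf_pval_bounds)
  show "measure M {\<omega>\<in>space M. pval k t (snd (Z 0 \<omega>)) \<omega> \<le> b} \<le> b" if "b \<in> {0<..<1}" for k b
    using that by (intro pval_true_label_le) simp
qed

(* F is not assumed measurable: events defined through it are measurable only because the
   p-values range over the finite grid j / (n + 1). *)
lemma sets_Collect_determined_by_pvals:
  assumes labels: "\<And>\<omega>. \<omega> \<in> space M \<Longrightarrow> snd (Z 0 \<omega>) \<in> {1..C}"
    and determined: "\<And>\<omega> \<omega>'. \<omega> \<in> space M \<Longrightarrow> \<omega>' \<in> space M \<Longrightarrow> snd (Z 0 \<omega>) = snd (Z 0 \<omega>') \<Longrightarrow>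
      (\<And>t c' k. t \<le> T \<Longrightarrow> c' \<in> {1..C} \<Longrightarrow> k < K \<Longrightarrow> pval k t c' \<omega> = pval k t c' \<omega>') \<Longrightarrow>
      P \<omega> \<Longrightarrow> P \<omega>'"
  shows "{\<omega>\<in>space M. P \<omega>} \<in> sets M"
proof -
  define Dom where "Dom = {..T} \<times> {1..C} \<times> {..<K}"
  define grid where "grid = (\<lambda>j. real j / real (n + 1)) ` {..n + 1}"
  define f where "f = (\<lambda>\<omega>. (snd (Z 0 \<omega>), \<lambda>(t, c', k)\<in>Dom. pval k t c' \<omega>))"
  have fin_Dom: "finite Dom" unfolding Dom_def by simp
  show ?thesis
  proof (rule sets_Collect_determined_by_finite[where f = f and A = "{1..C} \<times> (Dom \<rightarrow>\<^sub>E grid)"])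
    show "finite ({1..C} \<times> (Dom \<rightarrow>\<^sub>E grid))"
      using fin_Dom unfolding grid_def by (intro finite_cartesian_product finite_PiE) auto
    show "f \<omega> \<in> {1..C} \<times> (Dom \<rightarrow>\<^sub>E grid)" if "\<omega> \<in> space M" for \<omega>
      using labels[OF that] conf_pval_mem_grid unfolding f_def grid_def by auto
    show "{\<omega>\<in>space M. f \<omega> = a} \<in> sets M" if "a \<in> {1..C} \<times> (Dom \<rightarrow>\<^sub>E grid)" for a
    proof -
      obtain c h where a: "a = (c, h)" by (cases a)
      then have h: "h \<in> extensional Dom" using that by (simp add: PiE_def)
      have "{\<omega>\<in>space M. f \<omega> = a} =
          {\<omega>\<in>space M. snd (Z 0 \<omega>) = c \<and> (\<forall>d\<in>Dom. pval (snd (snd d)) (fst d) (fst (snd d)) \<omega> = h d)}"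
        using h unfolding f_def a by (auto simp: fun_eq_iff extensional_def split: prod.splits)
      also have "\<dots> \<in> sets M"
        using fin_Dom label_measurable pval_measurable by measurable
      finally show ?thesis .
    qed
    show "P \<omega>'" if "\<omega> \<in> space M" "\<omega>' \<in> space M" "f \<omega> = f \<omega>'" "P \<omega>" for \<omega> \<omega>'
    proof (rule determined[OF that(1,2) _ _ that(4)])
      show "snd (Z 0 \<omega>) = snd (Z 0 \<omega>')" using that(3) unfolding f_def by simp
      show "pval k t c' \<omega> = pval k t c' \<omega>'" if "t \<le> T" "c' \<in> {1..C}" "k < K" for t c' k
        using fun_cong[OF arg_cong[where f = snd, OF \<open>f \<omega> = f \<omega>'\<close>], of "(t, c', k)"] that
        unfolding f_def Dom_def by simp
    qed
  qed
qed

lemma sets_merged_pval_true_label_le: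
  assumes "\<And>\<omega>. \<omega> \<in> space M \<Longrightarrow> snd (Z 0 \<omega>) \<in> {1..C}"
  shows "{\<omega>\<in>space M. merged_pval F K s n (\<lambda>i. Z i \<omega>) t (fst (Z 0 \<omega>)) (snd (Z 0 \<omega>)) \<le> \<alpha>} \<in> sets M"
proof (rule sets_Collect_determined_by_pvals[where T = t, OF assms])
  fix \<omega> \<omega>' assume \<omega>: "\<omega> \<in> space M" and label: "snd (Z 0 \<omega>) = snd (Z 0 \<omega>')"
    and same: "\<And>t' c' k. t' \<le> t \<Longrightarrow> c' \<in> {1..C} \<Longrightarrow> k < K \<Longrightarrow> pval k t' c' \<omega> = pval k t' c' \<omega>'"
  have "merged_pval F K s n (\<lambda>i. Z i \<omega>) t (fst (Z 0 \<omega>)) (snd (Z 0 \<omega>)) =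
      merged_pval F K s n (\<lambda>i. Z i \<omega>') t (fst (Z 0 \<omega>')) (snd (Z 0 \<omega>'))"
    unfolding merged_pval_def label using same assms[OF \<omega>] label
    by (intro arg_cong[where f = F] map_cong) auto
  then show "merged_pval F K s n (\<lambda>i. Z i \<omega>) t (fst (Z 0 \<omega>)) (snd (Z 0 \<omega>)) \<le> \<alpha> \<Longrightarrow>
      merged_pval F K s n (\<lambda>i. Z i \<omega>') t (fst (Z 0 \<omega>')) (snd (Z 0 \<omega>')) \<le> \<alpha>" by simp
qed

lemma sets_spikecp_coverage:
  assumes "\<And>\<omega>. \<omega> \<in> space M \<Longrightarrow> snd (Z 0 \<omega>) \<in> {1..C}" and "Ts \<subseteq> {1..T}"
  shows "{\<omega>\<in>space M. snd (Z 0 \<omega>) \<in> spikecp_set F K s n (\<lambda>i. Z i \<omega>) C \<alpha> Ts T Ith (fst (Z 0 \<omega>))} \<in> sets M"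
proof (rule sets_Collect_determined_by_pvals[OF assms(1)])
  fix \<omega> \<omega>' assume label: "snd (Z 0 \<omega>) = snd (Z 0 \<omega>')"
    and same: "\<And>t c' k. t \<le> T \<Longrightarrow> c' \<in> {1..C} \<Longrightarrow> k < K \<Longrightarrow> pval k t c' \<omega> = pval k t c' \<omega>'"
  have "spikecp_set F K s n (\<lambda>i. Z i \<omega>) C \<alpha> Ts T Ith (fst (Z 0 \<omega>)) =
      spikecp_set F K s n (\<lambda>i. Z i \<omega>') C \<alpha> Ts T Ith (fst (Z 0 \<omega>'))"
    by (rule spikecp_set_cong[OF assms(2) same])
  then show "snd (Z 0 \<omega>) \<in> spikecp_set F K s n (\<lambda>i. Z i \<omega>) C \<alpha> Ts T Ith (fst (Z 0 \<omega>)) \<Longrightarrow>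
      snd (Z 0 \<omega>') \<in> spikecp_set F K s n (\<lambda>i. Z i \<omega>') C \<alpha> Ts T Ith (fst (Z 0 \<omega>'))"
    by (simp only: label)
qed

lemma spikecp_coverage:
  fixes \<alpha> :: real
  assumes labels: "\<And>\<omega>. \<omega> \<in> space M \<Longrightarrow> snd (Z 0 \<omega>) \<in> {1..C}"
    and Ts: "Ts \<subseteq> {1..T}" "T \<in> Ts" and F: "p_merging TYPE('w) K F" and \<alpha>: "\<alpha> \<in> {0<..<1}"
  shows "1 - card Ts * \<alpha> \<le>
    measure M {\<omega>\<in>space M. snd (Z 0 \<omega>) \<in> spikecp_set F K s n (\<lambda>i. Z i \<omega>) C \<alpha> Ts T Ith (fst (Z 0 \<omega>))}"
    (is "_ \<le> measure M ?E")
proof -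
  define miss where "miss t =
    {\<omega>\<in>space M. merged_pval F K s n (\<lambda>i. Z i \<omega>) t (fst (Z 0 \<omega>)) (snd (Z 0 \<omega>)) \<le> \<alpha>}" for t
  have fin: "finite Ts" using finite_subset[OF Ts(1)] by simp
  have miss_sets: "miss t \<in> sets M" for t
    unfolding miss_def using labels by (rule sets_merged_pval_true_label_le)
  have "space M - ?E \<subseteq> (\<Union>t\<in>Ts. miss t)"
  proof
    fix \<omega> assume "\<omega> \<in> space M - ?E"
    then have \<omega>: "\<omega> \<in> space M" "snd (Z 0 \<omega>) \<notin> spikecp_set F K s n (\<lambda>i. Z i \<omega>) C \<alpha> Ts T Ith (fst (Z 0 \<omega>))"
      by simp_all
    from notin_spikecp_set[OF fin labels[OF \<omega>(1)] \<omega>(2)] obtain t where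
      "t \<in> insert T Ts" "merged_pval F K s n (\<lambda>i. Z i \<omega>) t (fst (Z 0 \<omega>)) (snd (Z 0 \<omega>)) \<le> \<alpha>" ..
    with \<omega>(1) show "\<omega> \<in> (\<Union>t\<in>Ts. miss t)"
      unfolding miss_def insert_absorb[OF Ts(2)] by (intro UN_I[of t]) simp_all
  qed
  moreover have "(\<Union>t\<in>Ts. miss t) \<in> sets M"
    by (rule sets.finite_UN[OF fin]) (rule miss_sets)
  ultimately have "prob (space M - ?E) \<le> prob (\<Union>t\<in>Ts. miss t)"
    by (rule finite_measure_mono)
  also have "\<dots> \<le> (\<Sum>t\<in>Ts. prob (miss t))"
    by (rule measure_UNION_le[OF fin]) (rule miss_sets)
  also have "\<dots> \<le> (\<Sum>t\<in>Ts. \<alpha>)"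
    unfolding miss_def by (rule sum_mono) (rule merged_pval_true_label_le[OF F \<alpha>])
  also have "\<dots> = card Ts * \<alpha>" by simp
  finally show ?thesis
    using prob_compl[OF sets_spikecp_coverage[where F = F and K = K and \<alpha> = \<alpha> and Ith = Ith, OF labels Ts(1)]]
    by linarith
qed

end

theorem mainTheorem2:
  fixes M :: "'w measure" and S :: "'a measure"
    and Z :: "nat \<Rightarrow> 'w \<Rightarrow> 'a \<times> nat"
    and s :: "nat \<Rightarrow> nat \<Rightarrow> 'a \<Rightarrow> nat \<Rightarrow> real"
    and F :: "real list \<Rightarrow> real"
    and n K C T Ith :: nat and Ts :: "nat set" and ptarg :: real
  assumes "prob_space M"
    and indep: "prob_space.indep_vars M (\<lambda>_. S \<Otimes>\<^sub>M count_space UNIV) Z {0..n}"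
    and ident: "\<forall>i\<in>{0..n}. distr M (S \<Otimes>\<^sub>M count_space UNIV) (Z i) = distr M (S \<Otimes>\<^sub>M count_space UNIV) (Z 0)"
    and labels: "\<forall>i\<in>{0..n}. \<forall>\<omega>\<in>space M. snd (Z i \<omega>) \<in> {1..C}"
    and s_meas: "\<forall>k t c'. (\<lambda>x. s k t x c') \<in> borel_measurable S"
    and Ts: "Ts \<subseteq> {1..T}" "T \<in> Ts"
    and ptarg: "0 < ptarg" "ptarg < 1"
    and F: "p_merging TYPE('w) K F"
  shows "measure M {\<omega>\<in>space M. snd (Z 0 \<omega>) \<in>
            spikecp_set F K s n (\<lambda>i. Z i \<omega>) C ((1 - ptarg) / real (card Ts)) Ts T Ith (fst (Z 0 \<omega>))}
         \<ge> ptarg"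
proof -
  interpret iid_calibration M S Z n s
    by (rule iid_calibration.intro[OF \<open>prob_space M\<close> iid_calibration_axioms.intro[OF indep]])
      (use ident s_meas in blast)+
  define \<alpha> where "\<alpha> = (1 - ptarg) / real (card Ts)"
  have "finite Ts" by (rule finite_subset[OF Ts(1)]) simp
  then have "0 < real (card Ts)" using Ts(2) by (auto simp: card_gt_0_iff)
  then have \<alpha>_split: "card Ts * \<alpha> = 1 - ptarg" unfolding \<alpha>_def by simp
  have \<alpha>_range: "\<alpha> \<in> {0<..<1}"
    using \<alpha>_split \<open>0 < real (card Ts)\<close> ptarg by (auto simp: \<alpha>_def)
  have "\<forall>\<omega>\<in>space M. snd (Z 0 \<omega>) \<in> {1..C}" using labels by simp
  then have "\<And>\<omega>. \<omega> \<in> space M \<Longrightarrow> snd (Z 0 \<omega>) \<in> {1..C}" by (rule bspec)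
  from spikecp_coverage[OF this Ts F \<alpha>_range, of Ith]
  show ?thesis unfolding \<alpha>_def[symmetric] \<alpha>_split by linarith
qed

end
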